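(* Fix $\beta>0$ and for positive integers $p$ set $x_p=\beta^p/(\beta+1)^{p+1}$. Then $$\Phi_\beta(p,0)=\frac{\beta}{\beta+1}(1+x_p)+x_p\,\varepsilon_p,$$ where $\varepsilon_p\to 0$ as $p\to\infty$.
   Context: For $\beta>0$, $W_\beta$ is the random walk on $\mathbb{Z}^2$ starting at the origin which, independently at each step, moves from $(a,b)$ to $(a+1,b)$ with probability $1/(\beta+1)$ and to $(a,b+1)$ with probability $\beta/(\beta+1)$. For a nonnegative integer $p$, $\Phi_\beta(p,0)$ is the probability that $W_\beta$ visits at least one of the lattice points $(n,pn+1)$, $n\ge 0$. *)

theory Defs
  imports "HOL-Probability.Probability"
begin

text \<open>A step of the walk is a boolean: True = up step (a,b) to (a,b+1), taken with
probability beta/(beta+1); False = right step (a,b) to (a+1,b), with probability 1/(beta+1).\<close>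

definition step_dist :: "real \<Rightarrow> bool pmf" where
  "step_dist \<beta> = bernoulli_pmf (\<beta> / (\<beta> + 1))"

definition walk_space :: "real \<Rightarrow> bool stream measure" where
  "walk_space \<beta> = stream_space (measure_pmf (step_dist \<beta>))"

definition walk_pos :: "bool stream \<Rightarrow> nat \<Rightarrow> nat \<times> nat" where
  "walk_pos \<omega> k = (length (filter (\<lambda>b. \<not> b) (stake k \<omega>)), length (filter (\<lambda>b. b) (stake k \<omega>)))"

text \<open>Phi beta p = Phi_beta(p,0): probability that the walk visits some point (n, p n + 1), n >= 0.\<close>
definition Phi :: "real \<Rightarrow> nat \<Rightarrow> real" where
  "Phi \<beta> p = measure (walk_space \<beta>) {\<omega>. \<exists>k n. walk_pos \<omega> k = (n, p * n + 1)}"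

end

theory Submission
  imports Defs
begin

text \<open>
  Write q = beta/(beta+1) for the probability of an up step and x_p = (1-q) q^p,
  which equals beta^p/(beta+1)^(p+1).  The walk meets the line b = p a + 1 at
  (n, p n + 1) exactly when it has made n right steps among its first n (p+1) + 1
  steps.  Hitting with n = 0 (first step up, probability q) or with n = 1 via the
  path "right, then p+1 ups" (probability (1-q) q^(p+1) = q x_p) are disjoint events,
  which gives the lower bound q (1 + x_p) <= Phi.  Conversely, any hit with n <= 1
  is one of these two events, and every hit with n >= 2 is bounded by a Chernoff
  estimate: P(exactly n right steps among k) <= (q + (1-q) z)^k / z^n for every z > 0,
  obtained from the generating function of the number of right steps.  Summing the
  geometric series and choosing z = q/((1-q) p) bounds the excess by 4 (e^2 p x_p)^2.
  Hence eps_p = (Phi - q (1 + x_p))/x_p lies between 0 and 4 e^4 p^2 x_p, which tends to 0.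
\<close>

abbreviation bernoulli_walk :: "real \<Rightarrow> bool stream measure" where
  "bernoulli_walk q \<equiv> stream_space (measure_pmf (bernoulli_pmf q))"

text \<open>Stream spaces over a pmf have the same measurable sets as over the discrete space,
  so measurability can be checked once for the counting measure.\<close>

lemma sets_stream_pmf:
  "sets (stream_space (measure_pmf D)) = sets (stream_space (count_space UNIV))"
  by (intro sets_stream_space_cong) simp

lemma measurable_stream_pmf:
  "measurable (stream_space (measure_pmf D)) N = measurable (stream_space (count_space UNIV)) N"
  by (intro measurable_cong_sets sets_stream_pmf) simp

lemma pred_in_sets_stream_pmf:
  assumes "Measurable.pred (stream_space (count_space UNIV)) P"
  shows "{\<omega>. P \<omega>} \<in> sets (stream_space (measure_pmf D))"
  using measurable_sets[OF assms, of "{True}"]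
  by (simp add: sets_stream_pmf space_stream_space vimage_def)

lemma prob_space_stream_pmf: "prob_space (stream_space (measure_pmf D))"
  by (rule prob_space.prob_space_stream_space[OF prob_space_measure_pmf])

lemma nn_integral_stream_prod:
  fixes D :: "'a::countable pmf" and fs :: "('a \<Rightarrow> ennreal) list"
  shows "(\<integral>\<^sup>+\<omega>. (\<Prod>i<length fs. (fs ! i) (\<omega> !! i)) \<partial>stream_space (measure_pmf D))
         = (\<Prod>f\<leftarrow>fs. \<integral>\<^sup>+x. f x \<partial>measure_pmf D)"
proof (induction fs)
  case Nil
  show ?case
    using prob_space.emeasure_space_1[OF prob_space_stream_pmf] by simp
next
  case (Cons f gs)
  let ?S = "stream_space (measure_pmf D)"
  have meas: "(\<lambda>\<omega>. \<Prod>i<length hs. (hs ! i) (\<omega> !! i)) \<in> borel_measurable ?S"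
    for hs :: "('a \<Rightarrow> ennreal) list"
    unfolding measurable_stream_pmf by measurable
  have "(\<integral>\<^sup>+\<omega>. (\<Prod>i<length (f # gs). ((f # gs) ! i) (\<omega> !! i)) \<partial>?S)
      = (\<integral>\<^sup>+x. (\<integral>\<^sup>+X. (\<Prod>i<length (f # gs). ((f # gs) ! i) ((x ## X) !! i)) \<partial>?S) \<partial>measure_pmf D)"
    by (rule prob_space.nn_integral_stream_space[OF prob_space_measure_pmf meas])
  also have "\<dots> = (\<integral>\<^sup>+x. f x * (\<integral>\<^sup>+X. (\<Prod>i<length gs. (gs ! i) (X !! i)) \<partial>?S) \<partial>measure_pmf D)"
    by (intro nn_integral_cong, subst nn_integral_cmult[symmetric])
       (simp_all add: meas prod.lessThan_Suc_shift del: prod.lessThan_Suc)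
  also have "\<dots> = (\<integral>\<^sup>+x. f x \<partial>measure_pmf D) * (\<Prod>g\<leftarrow>gs. \<integral>\<^sup>+x. g x \<partial>measure_pmf D)"
    by (simp add: Cons.IH nn_integral_multc)
  finally show ?case by simp
qed

definition cylinder :: "'a list \<Rightarrow> 'a stream set" where
  "cylinder xs = {\<omega>. stake (length xs) \<omega> = xs}"

lemma cylinder_in_sets: "cylinder xs \<in> sets (stream_space (measure_pmf (D :: 'a::countable pmf)))"
  unfolding cylinder_def by (rule pred_in_sets_stream_pmf) measurable

lemma emeasure_cylinder:
  fixes D :: "'a::countable pmf"
  shows "emeasure (stream_space (measure_pmf D)) (cylinder xs) = ennreal (\<Prod>x\<leftarrow>xs. pmf D x)"
proof -
  have ind: "indicator (cylinder xs) \<omega> = (\<Prod>i<length xs. indicator {xs ! i} (\<omega> !! i) :: ennreal)" for \<omega>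
  proof -
    have "\<omega> \<in> cylinder xs \<longleftrightarrow> (\<forall>i<length xs. \<omega> !! i = xs ! i)"
      by (auto simp: cylinder_def list_eq_iff_nth_eq)
    then show ?thesis
      by (auto simp: indicator_def prod_zero_iff)
  qed
  have "emeasure (stream_space (measure_pmf D)) (cylinder xs)
      = (\<integral>\<^sup>+\<omega>. (\<Prod>i<length xs. indicator {xs ! i} (\<omega> !! i)) \<partial>stream_space (measure_pmf D))"
    by (simp add: ind[symmetric] cylinder_in_sets)
  also have "\<dots> = (\<Prod>x\<leftarrow>xs. \<integral>\<^sup>+y. indicator {x} y \<partial>measure_pmf D)"
    using nn_integral_stream_prod[of D "map (\<lambda>x. indicator {x}) xs"] by (simp add: comp_def)
  also have "\<dots> = ennreal (\<Prod>x\<leftarrow>xs. pmf D x)"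
    by (induction xs) (simp_all add: emeasure_pmf_single ennreal_mult' prod_list_nonneg)
  finally show ?thesis .
qed

lemma measure_cylinder:
  fixes D :: "'a::countable pmf"
  shows "measure (stream_space (measure_pmf D)) (cylinder xs) = (\<Prod>x\<leftarrow>xs. pmf D x)"
  unfolding measure_def emeasure_cylinder by (rule enn2real_ennreal, rule prod_list_nonneg) auto

lemma power_right_steps:
  fixes z :: "'a::comm_monoid_mult"
  shows "z ^ fst (walk_pos \<omega> k) = (\<Prod>i<k. if \<omega> !! i then 1 else z)"
  by (induction k) (simp_all add: walk_pos_def stake_Suc mult.commute del: stake.simps(2))

lemma generating_function_right_steps:
  fixes q z :: real
  assumes "0 \<le> q" "q \<le> 1" "0 \<le> z"
  shows "(\<integral>\<^sup>+\<omega>. ennreal z ^ fst (walk_pos \<omega> k) \<partial>bernoulli_walk q) = ennreal (q + (1 - q) * z) ^ k"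
proof -
  let ?f = "\<lambda>b. if b then 1 else ennreal z"
  have "(\<integral>\<^sup>+\<omega>. ennreal z ^ fst (walk_pos \<omega> k) \<partial>bernoulli_walk q)
      = (\<integral>\<^sup>+\<omega>. (\<Prod>i<length (replicate k ?f). (replicate k ?f ! i) (\<omega> !! i)) \<partial>bernoulli_walk q)"
    by (simp add: power_right_steps)
  also have "\<dots> = (\<integral>\<^sup>+b. ?f b \<partial>bernoulli_pmf q) ^ k"
    by (subst nn_integral_stream_prod) (simp add: prod_list_replicate)
  also have "(\<integral>\<^sup>+b. ?f b \<partial>bernoulli_pmf q) = ennreal (q + (1 - q) * z)"
    using assms by (simp add: ennreal_mult'[symmetric] ennreal_plus[symmetric] del: ennreal_plus)
  finally show ?thesis .
qed

text \<open>Chernoff-type bound (Markov's inequality applied to z to the number of right steps):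
  for every z > 0, P(exactly n right steps among the first k) <= (q + (1-q) z)^k / z^n.\<close>

lemma right_steps_tail_bound:
  fixes q z :: real
  assumes "0 \<le> q" "q \<le> 1" "0 < z"
  shows "emeasure (bernoulli_walk q) {\<omega>. fst (walk_pos \<omega> k) = n} \<le> ennreal ((q + (1 - q) * z) ^ k / z ^ n)"
proof -
  have meas: "(\<lambda>\<omega>. ennreal z ^ fst (walk_pos \<omega> k)) \<in> borel_measurable (bernoulli_walk q)"
    unfolding measurable_stream_pmf walk_pos_def by measurable
  have "{\<omega>. fst (walk_pos \<omega> k) = n} \<in> sets (bernoulli_walk q)"
    unfolding walk_pos_def by (rule pred_in_sets_stream_pmf) measurable
  then have "emeasure (bernoulli_walk q) {\<omega>. fst (walk_pos \<omega> k) = n}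
      = (\<integral>\<^sup>+\<omega>. indicator {\<omega>. fst (walk_pos \<omega> k) = n} \<omega> \<partial>bernoulli_walk q)"
    by simp
  also have "\<dots> \<le> (\<integral>\<^sup>+\<omega>. ennreal z ^ fst (walk_pos \<omega> k) * ennreal (1 / z ^ n) \<partial>bernoulli_walk q)"
    using assms(3) by (intro nn_integral_mono) (auto split: split_indicator simp: ennreal_power ennreal_mult'[symmetric])
  also have "\<dots> = ennreal (q + (1 - q) * z) ^ k * ennreal (1 / z ^ n)"
    using assms by (simp add: nn_integral_multc meas generating_function_right_steps)
  also have "\<dots> = ennreal ((q + (1 - q) * z) ^ k / z ^ n)"
  proof -
    have "0 \<le> q + (1 - q) * z" using assms by simp
    then show ?thesis
      using assms by (simp add: ennreal_power ennreal_mult''[symmetric] del: ennreal_plus)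
  qed
  finally show ?thesis .
qed

definition hit_event :: "nat \<Rightarrow> bool stream set" where
  "hit_event p = {\<omega>. \<exists>k n. walk_pos \<omega> k = (n, p * n + 1)}"

lemma hit_event_in_sets: "hit_event p \<in> sets (stream_space (measure_pmf D))"
  unfolding hit_event_def walk_pos_def by (rule pred_in_sets_stream_pmf) measurable

lemma walk_pos_eq_hit_iff:
  "walk_pos \<omega> k = (n, p * n + 1) \<longleftrightarrow> k = n * (p + 1) + 1 \<and> fst (walk_pos \<omega> k) = n"
proof -
  have "fst (walk_pos \<omega> k) + snd (walk_pos \<omega> k) = k"
    using sum_length_filter_compl[of "\<lambda>b. b" "stake k \<omega>"] by (simp add: walk_pos_def)
  then show ?thesis
    by (cases "walk_pos \<omega> k") (auto simp: add_mult_distrib2)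
qed

lemma cylinders_subset_hit_event:
  "cylinder [True] \<union> cylinder (False # replicate (p + 1) True) \<subseteq> hit_event p"
proof -
  have "walk_pos \<omega> 1 = (0, p * 0 + 1)" if "\<omega> \<in> cylinder [True]" for \<omega>
    using that by (simp add: cylinder_def walk_pos_def)
  moreover have "walk_pos \<omega> (p + 2) = (1, p * 1 + 1)"
    if "\<omega> \<in> cylinder (False # replicate (p + 1) True)" for \<omega>
    using that by (simp add: cylinder_def walk_pos_def)
  ultimately show ?thesis
    unfolding hit_event_def by blast
qed

lemma hit_event_subset:
  "hit_event p \<subseteq> cylinder [True] \<union> cylinder (False # replicate (p + 1) True)
     \<union> (\<Union>m. {\<omega>. fst (walk_pos \<omega> ((m + 2) * (p + 1) + 1)) = m + 2})"
proof
  fix \<omega> assume "\<omega> \<in> hit_event p"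
  then obtain n where n: "fst (walk_pos \<omega> (n * (p + 1) + 1)) = n"
    unfolding hit_event_def walk_pos_eq_hit_iff by blast
  have "n = 0 \<or> n = 1 \<or> (\<exists>m. n = m + 2)"
    by presburger
  then consider "n = 0" | "n = 1" | m where "n = m + 2"
    by blast
  then show "\<omega> \<in> cylinder [True] \<union> cylinder (False # replicate (p + 1) True)
     \<union> (\<Union>m. {\<omega>. fst (walk_pos \<omega> ((m + 2) * (p + 1) + 1)) = m + 2})"
  proof cases
    case 1
    then have "\<omega> \<in> cylinder [True]"
      using n by (auto simp: cylinder_def walk_pos_def split: if_splits)
    then show ?thesis by blast
  next
    case 2
    have "\<omega> \<in> cylinder [True] \<union> cylinder (False # replicate (p + 1) True)"
    proof (cases "shd \<omega>")
      case True
      then show ?thesis by (simp add: cylinder_def)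
    next
      case False
      then have "filter Not (stake (p + 1) (stl \<omega>)) = []"
        using n 2 by (simp add: walk_pos_def)
      then have "stake (p + 1) (stl \<omega>) = replicate (p + 1) True"
        by (metis filter_empty_conv length_stake replicate_eqI)
      then show ?thesis using False by (simp add: cylinder_def)
    qed
    then show ?thesis by blast
  next
    case 3
    then show ?thesis using n by blast
  qed
qed

lemma hit_probability_lower:
  fixes q :: real
  assumes "0 \<le> q" "q \<le> 1"
  shows "q + (1 - q) * q ^ (p + 1) \<le> measure (bernoulli_walk q) (hit_event p)"
proof -
  interpret prob_space "bernoulli_walk q"
    by (rule prob_space_stream_pmf)
  have "cylinder [True] \<inter> cylinder (False # replicate (p + 1) True) = {}"
    by (auto simp: cylinder_def)
  then have "measure (bernoulli_walk q) (cylinder [True] \<union> cylinder (False # replicate (p + 1) True))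
      = q + (1 - q) * q ^ (p + 1)"
    using assms by (simp add: finite_measure_Union cylinder_in_sets measure_cylinder
                             map_replicate prod_list_replicate)
  moreover have "measure (bernoulli_walk q) (cylinder [True] \<union> cylinder (False # replicate (p + 1) True))
      \<le> measure (bernoulli_walk q) (hit_event p)"
    by (intro finite_measure_mono cylinders_subset_hit_event hit_event_in_sets)
  ultimately show ?thesis by simp
qed

lemma geometric_tail_ennreal:
  fixes c w :: real
  assumes "0 \<le> c" "0 \<le> w" "w < 1"
  shows "(\<Sum>m. ennreal (c * w ^ (m + 2))) = ennreal (c * w\<^sup>2 / (1 - w))"
proof -
  have "(\<lambda>m. c * w\<^sup>2 * w ^ m) sums (c * w\<^sup>2 * (1 / (1 - w)))"
    using assms by (intro sums_mult geometric_sums) simp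
  moreover have "(\<lambda>m. c * w\<^sup>2 * w ^ m) = (\<lambda>m. c * w ^ (m + 2))"
    by (simp add: fun_eq_iff power_add power2_eq_square mult_ac)
  ultimately have sums: "(\<lambda>m. c * w ^ (m + 2)) sums (c * w\<^sup>2 / (1 - w))"
    by simp
  have "(\<Sum>m. ennreal (c * w ^ (m + 2))) = ennreal (\<Sum>m. c * w ^ (m + 2))"
    using assms sums_summable[OF sums] by (intro suminf_ennreal2) simp_all
  then show ?thesis
    using sums_unique[OF sums] by simp
qed

lemma level_hit_bound:
  fixes q z :: real and p n :: nat
  assumes q: "0 \<le> q" "q \<le> 1" and z: "0 < z"
  defines "c \<equiv> q + (1 - q) * z"
  defines "w \<equiv> c ^ (p + 1) / z"
  shows "emeasure (bernoulli_walk q) {\<omega>. fst (walk_pos \<omega> (n * (p + 1) + 1)) = n} \<le> ennreal (c * w ^ n)"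
proof -
  have "c ^ (n * (p + 1) + 1) = c * (c ^ (p + 1)) ^ n"
    by (metis mult.commute power_add power_mult power_one_right)
  then have eq: "c ^ (n * (p + 1) + 1) / z ^ n = c * w ^ n"
    by (simp add: w_def power_divide)
  have "emeasure (bernoulli_walk q) {\<omega>. fst (walk_pos \<omega> (n * (p + 1) + 1)) = n}
      \<le> ennreal (c ^ (n * (p + 1) + 1) / z ^ n)"
    unfolding c_def by (rule right_steps_tail_bound[OF q z])
  then show ?thesis
    unfolding eq .
qed

lemma hit_probability_upper:
  fixes q z :: real and p :: nat
  assumes q: "0 \<le> q" "q \<le> 1" and z: "0 < z"
  defines "c \<equiv> q + (1 - q) * z"
  defines "w \<equiv> c ^ (p + 1) / z"
  assumes w_lt_1: "w < 1"
  shows "measure (bernoulli_walk q) (hit_event p) \<le> q + (1 - q) * q ^ (p + 1) + c * w\<^sup>2 / (1 - w)"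
proof -
  define A where "A = cylinder [True] \<union> cylinder (False # replicate (p + 1) True)"
  define B where "B m = {\<omega>. fst (walk_pos \<omega> ((m + 2) * (p + 1) + 1)) = m + 2}" for m
  have c: "0 \<le> c" and w: "0 \<le> w"
    using q z by (simp_all add: c_def w_def)
  have B_sets: "B m \<in> sets (bernoulli_walk q)" for m
    unfolding B_def walk_pos_def by (rule pred_in_sets_stream_pmf) measurable
  have B_bound: "emeasure (bernoulli_walk q) (B m) \<le> ennreal (c * w ^ (m + 2))" for m
    unfolding B_def c_def w_def by (rule level_hit_bound[OF q z])
  have A_bound: "emeasure (bernoulli_walk q) A \<le> ennreal (q + (1 - q) * q ^ (p + 1))"
  proof -
    have "emeasure (bernoulli_walk q) A \<le> emeasure (bernoulli_walk q) (cylinder [True])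
        + emeasure (bernoulli_walk q) (cylinder (False # replicate (p + 1) True))"
      unfolding A_def by (intro emeasure_subadditive cylinder_in_sets)
    also have "\<dots> = ennreal (q + (1 - q) * q ^ (p + 1))"
      using q by (simp add: emeasure_cylinder map_replicate prod_list_replicate ennreal_plus
                  del: replicate.simps)
    finally show ?thesis .
  qed
  have "emeasure (bernoulli_walk q) (hit_event p) \<le> emeasure (bernoulli_walk q) (A \<union> (\<Union>m. B m))"
  proof (rule emeasure_mono)
    show "hit_event p \<subseteq> A \<union> (\<Union>m. B m)"
      using hit_event_subset[of p] by (simp only: A_def B_def)
    show "A \<union> (\<Union>m. B m) \<in> sets (bernoulli_walk q)"
      using B_sets unfolding A_def by (intro sets.Un sets.countable_UN cylinder_in_sets) blast
  qed
  also have "\<dots> \<le> emeasure (bernoulli_walk q) A + (\<Sum>m. emeasure (bernoulli_walk q) (B m))"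
    by (intro order.trans[OF emeasure_subadditive] add_mono emeasure_subadditive_countably)
       (auto simp: A_def cylinder_in_sets B_sets)
  also have "\<dots> \<le> ennreal (q + (1 - q) * q ^ (p + 1)) + (\<Sum>m. ennreal (c * w ^ (m + 2)))"
    by (intro add_mono A_bound suminf_le summableI B_bound)
  also have "\<dots> = ennreal (q + (1 - q) * q ^ (p + 1) + c * w\<^sup>2 / (1 - w))"
    using q c w w_lt_1
    by (subst geometric_tail_ennreal[OF c w w_lt_1]) (simp add: ennreal_plus[symmetric] del: ennreal_plus)
  finally show ?thesis
    unfolding measure_def by (intro enn2real_leI) (use q c w w_lt_1 in simp_all)
qed

lemma one_plus_inverse_power_le:
  assumes "p \<ge> (1::nat)"
  shows "(1 + 1 / real p) ^ (p + 1) \<le> exp 2"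
proof -
  have "(1 + 1 / real p) ^ (p + 1) \<le> exp (1 / real p) ^ (p + 1)"
    by (intro power_mono exp_ge_add_one_self) simp
  also have "\<dots> = exp (real (p + 1) * (1 / real p))"
    by (simp only: exp_of_nat_mult)
  also have "\<dots> \<le> exp 2"
    using assms by (simp add: field_simps)
  finally show ?thesis .
qed

text \<open>With z = q/((1-q) p) the ratio w is at most e^2 p x_p; once this is at most 1/2 the
  excess of the hitting probability over q (1 + x_p) is at most 4 (e^2 p x_p)^2.\<close>

lemma hit_probability_error_bound:
  fixes q :: real and p :: nat
  assumes q: "0 < q" "q < 1" and p: "p \<ge> 1"
  defines "x \<equiv> (1 - q) * q ^ p"
  assumes small: "exp 2 * real p * x \<le> 1 / 2"
  shows "measure (bernoulli_walk q) (hit_event p) - q * (1 + x) \<le> 4 * (exp 2 * real p * x)\<^sup>2"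
proof -
  define z where "z = q / ((1 - q) * real p)"
  define c where "c = q + (1 - q) * z"
  define w where "w = c ^ (p + 1) / z"
  have p_pos: "real p > 0" using p by simp
  have z: "z > 0" using q p_pos by (simp add: z_def)
  have c_eq: "c = q * (1 + 1 / real p)"
    using q p_pos by (simp add: c_def z_def field_simps)
  have "1 / real p \<le> 1" using p by simp
  then have c: "0 \<le> c" "c \<le> 2"
    using q mult_mono[of q 1 "1 + 1 / real p" 2] by (simp_all add: c_eq)
  define a where "a = (1 + 1 / real p) ^ (p + 1)"
  have "c ^ (p + 1) = q ^ (p + 1) * a"
    by (simp add: c_eq a_def power_mult_distrib)
  then have w_eq: "w = real p * x * a"
    using q p_pos by (simp add: w_def z_def x_def field_simps)
  have a: "0 \<le> a" "a \<le> exp 2"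
    using one_plus_inverse_power_le[OF p] by (simp_all add: a_def)
  have px: "0 \<le> real p * x"
    using q by (simp add: x_def)
  have w: "0 \<le> w" "w \<le> exp 2 * real p * x"
    using mult_left_mono[OF a(2) px] px a by (simp_all add: w_eq mult_ac)
  then have w_half: "w \<le> 1 / 2" using small by linarith
  have "measure (bernoulli_walk q) (hit_event p) \<le> q + (1 - q) * q ^ (p + 1) + c * w\<^sup>2 / (1 - w)"
    using hit_probability_upper[of q z p] q z w_half by (simp add: c_def w_def)
  moreover have "q + (1 - q) * q ^ (p + 1) = q * (1 + x)"
    by (simp add: x_def algebra_simps)
  moreover have "c * w\<^sup>2 / (1 - w) \<le> 4 * w\<^sup>2"
  proof -
    have "c * w\<^sup>2 / (1 - w) \<le> 2 * w\<^sup>2 / (1 / 2)"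
      using c w w_half by (intro frac_le mult_right_mono) auto
    then show ?thesis by simp
  qed
  moreover have "w\<^sup>2 \<le> (exp 2 * real p * x)\<^sup>2"
    using w by (intro power_mono) auto
  ultimately show ?thesis by linarith
qed

lemma square_times_geometric_tendsto_zero:
  fixes q :: real
  assumes "0 \<le> q" "q < 1"
  shows "(\<lambda>n. (real n)\<^sup>2 * q ^ n) \<longlonglongrightarrow> 0"
proof -
  have "(\<lambda>n. (real n * sqrt q ^ n)\<^sup>2) \<longlonglongrightarrow> 0\<^sup>2"
    using assms by (intro tendsto_power powser_times_n_limit_0) simp
  moreover have "(real n * sqrt q ^ n)\<^sup>2 = (real n)\<^sup>2 * q ^ n" for n
    using assms by (simp add: power_mult_distrib power_mult[symmetric] mult.commute[of n 2] power_mult)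
  ultimately show ?thesis by simp
qed

lemma hit_probability_excess_eventually:
  fixes q :: real
  assumes q: "0 < q" "q < 1"
  defines "x \<equiv> \<lambda>p::nat. (1 - q) * q ^ p"
  shows "\<forall>\<^sub>F p in sequentially.
           measure (bernoulli_walk q) (hit_event p) - q * (1 + x p) \<le> 4 * exp 2 ^ 2 * ((real p)\<^sup>2 * x p) * x p"
proof -
  have "(\<lambda>p. exp 2 * (1 - q) * ((real p)\<^sup>2 * q ^ p)) \<longlonglongrightarrow> exp 2 * (1 - q) * 0"
    using q by (intro tendsto_mult_left square_times_geometric_tendsto_zero) simp_all
  then have "\<forall>\<^sub>F p in sequentially. exp 2 * (1 - q) * ((real p)\<^sup>2 * q ^ p) < 1 / 2"
    by (rule order_tendstoD(2)) simp
  then show ?thesis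
    using eventually_ge_at_top[of "1::nat"]
  proof eventually_elim
    case (elim p)
    have "real p \<le> (real p)\<^sup>2"
      using le_square[of p] by (simp add: power2_eq_square flip: of_nat_mult)
    then have "exp 2 * real p * x p \<le> exp 2 * (1 - q) * ((real p)\<^sup>2 * q ^ p)"
      using q by (simp add: x_def mult_ac mult_left_mono)
    with elim(1) have "exp 2 * real p * x p \<le> 1 / 2"
      by linarith
    from hit_probability_error_bound[OF q elim(2)] this
    have "measure (bernoulli_walk q) (hit_event p) - q * (1 + x p) \<le> 4 * (exp 2 * real p * x p)\<^sup>2"
      by (simp only: x_def)
    also have "\<dots> = 4 * exp 2 ^ 2 * ((real p)\<^sup>2 * x p) * x p"
      by algebra
    finally show ?case .
  qed
qed

lemma hit_probability_expansion:
  fixes q :: real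
  assumes q: "0 < q" "q < 1"
  defines "x \<equiv> \<lambda>p::nat. (1 - q) * q ^ p"
  shows "\<exists>\<epsilon>. \<epsilon> \<longlonglongrightarrow> 0 \<and> (\<forall>p. measure (bernoulli_walk q) (hit_event p) = q * (1 + x p) + x p * \<epsilon> p)"
proof -
  define \<epsilon> where "\<epsilon> p = (measure (bernoulli_walk q) (hit_event p) - q * (1 + x p)) / x p" for p
  have x_pos: "x p > 0" for p
    using q by (simp add: x_def)
  have "0 \<le> \<epsilon> p" for p
    using hit_probability_lower[of q p] q x_pos[of p] by (simp add: \<epsilon>_def x_def algebra_simps)
  then have lower: "\<forall>\<^sub>F p in sequentially. 0 \<le> \<epsilon> p"
    by simp
  have upper: "\<forall>\<^sub>F p in sequentially. \<epsilon> p \<le> 4 * exp 2 ^ 2 * ((real p)\<^sup>2 * x p)"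
    using hit_probability_excess_eventually[OF q]
    by eventually_elim (simp only: \<epsilon>_def x_def pos_divide_le_eq[OF x_pos[unfolded x_def]])
  have "(\<lambda>p. 4 * exp 2 ^ 2 * (1 - q) * ((real p)\<^sup>2 * q ^ p)) \<longlonglongrightarrow> 4 * exp 2 ^ 2 * (1 - q) * 0"
    using q by (intro tendsto_mult_left square_times_geometric_tendsto_zero) simp_all
  then have "(\<lambda>p. 4 * exp 2 ^ 2 * ((real p)\<^sup>2 * x p)) \<longlonglongrightarrow> 0"
    by (simp add: x_def mult_ac)
  then have "\<epsilon> \<longlonglongrightarrow> 0"
    by (rule tendsto_sandwich[OF lower upper tendsto_const])
  moreover have "measure (bernoulli_walk q) (hit_event p) = q * (1 + x p) + x p * \<epsilon> p" for p
    using x_pos[of p] by (simp add: \<epsilon>_def)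
  ultimately show ?thesis
    by blast
qed

lemma Phi_eq_hit_probability: "Phi \<beta> p = measure (bernoulli_walk (\<beta> / (\<beta> + 1))) (hit_event p)"
  by (simp add: Phi_def walk_space_def step_dist_def hit_event_def)

theorem mainTheorem10:
  fixes \<beta> :: real
  assumes "\<beta> > 0"
  shows "\<exists>\<epsilon> :: nat \<Rightarrow> real. \<epsilon> \<longlonglongrightarrow> 0 \<and>
    (\<forall>p \<ge> 1. Phi \<beta> p = \<beta> / (\<beta> + 1) * (1 + \<beta> ^ p / (\<beta> + 1) ^ (p + 1))
                         + \<beta> ^ p / (\<beta> + 1) ^ (p + 1) * \<epsilon> p)"
proof -
  define q where "q = \<beta> / (\<beta> + 1)"
  have q: "0 < q" "q < 1"
    using assms by (simp_all add: q_def)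
  have x_eq: "(1 - q) * q ^ p = \<beta> ^ p / (\<beta> + 1) ^ (p + 1)" for p
    using assms by (simp add: q_def field_simps power_divide)
  obtain \<epsilon> where "\<epsilon> \<longlonglongrightarrow> 0"
    and "\<forall>p. measure (bernoulli_walk q) (hit_event p) = q * (1 + (1 - q) * q ^ p) + (1 - q) * q ^ p * \<epsilon> p"
    using hit_probability_expansion[OF q] by blast
  then show ?thesis
    unfolding Phi_eq_hit_probability x_eq q_def[symmetric] by blast
qed

end
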